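(* Let $a_m=\binom{2m-1}{m}$ for $m\ge1$ (so $a_1,a_2,\dots=1,3,10,35,126,\dots$), and let the integers $T_{nj},U_{nj}$ be as defined below. Then for all $n\ge1$: $$\sum_{j=0}^n a_{n+j}T_{nj}=1,\qquad \sum_{j=0}^{n+1}a_{n+j}U_{nj}=3.$$
   Context: The numbers $T_{nj},U_{nj}$ (integers $n\ge0$, $j$) are defined by: $T_{nj}=U_{nj}=0$ whenever $j<0$; $T_{0j}=0$ for all $j\ge1$, $U_{01}=-1$, $U_{0j}=0$ for all $j\ge2$; $T_{10}=4$, $U_{10}=4$; and for all $n\ge1$, $j\ge0$ with $(n,j)\ne(1,0)$: $T_{nj}=-3T_{n-1,j}+U_{n-1,j}$ and $U_{nj}=-4T_{n-1,j}+U_{n-1,j}+T_{n,j-1}$. *)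

theory Defs
  imports Main
begin

definition a_seq :: "nat \<Rightarrow> int" where
  "a_seq m = int ((2 * m - 1) choose m)"

text \<open>TU n j = (T_{nj}, U_{nj}) for j \<ge> 0; values for j < 0 are 0 and
  enter only through the term T_{n,j-1}, which is 0 when j = 0.
  T_{00}, U_{00} are not specified in the paper and never used; we set them to 0.\<close>
fun TU :: "nat \<Rightarrow> nat \<Rightarrow> int \<times> int" where
  "TU 0 j = (0, if j = 1 then -1 else 0)"
| "TU (Suc 0) 0 = (4, 4)"
| "TU (Suc (Suc n)) 0 =
     (-3 * fst (TU (Suc n) 0) + snd (TU (Suc n) 0),
      -4 * fst (TU (Suc n) 0) + snd (TU (Suc n) 0))"
| "TU (Suc n) (Suc j) =
     (-3 * fst (TU n (Suc j)) + snd (TU n (Suc j)),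
      -4 * fst (TU n (Suc j)) + snd (TU n (Suc j)) + fst (TU (Suc n) j))"

definition T :: "nat \<Rightarrow> nat \<Rightarrow> int" where "T n j = fst (TU n j)"
definition U :: "nat \<Rightarrow> nat \<Rightarrow> int" where "U n j = snd (TU n j)"

end

theory Submission
  imports Defs
begin

text \<open>Let \<open>M\<^sub>n(k) = \<Sum>\<^sub>j a\<^sub>k\<^sub>+\<^sub>j T\<^sub>n\<^sub>j\<close>, and similarly for \<open>U\<close>. The
  recurrences for \<open>T\<close> and \<open>U\<close> become recurrences for these moments; eliminating the
  \<open>U\<close>-moments gives \<open>M\<^sub>n\<^sub>+\<^sub>2(k) = -2 M\<^sub>n\<^sub>+\<^sub>1(k) - M\<^sub>n(k) + M\<^sub>n\<^sub>+\<^sub>1(k+1)\<close>.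
  Since the row \<open>2k+1\<close> of Pascal's triangle is row \<open>2k-1\<close> convolved with \<open>(1,2,1)\<close>,
  this recurrence is solved by the ballot numbers
  \<open>M\<^sub>n(k) = C(2k-1, k-n) - C(2k-1, k-n-1)\<close> for \<open>n \<le> k + 1\<close>, with the two initial rows
  checked by the symmetry of binomial coefficients. At \<open>k = n\<close> this gives \<open>M\<^sub>n(n) = 1\<close>
  and \<open>M\<^sub>n\<^sub>+\<^sub>1(n) = 0\<close>, and the \<open>U\<close>-sum is \<open>M\<^sub>n\<^sub>+\<^sub>1(n) + 3 M\<^sub>n(n) = 3\<close>.\<close>

lemma T_0 [simp]: "T 0 j = 0"
  by (simp add: T_def)

lemma U_0 [simp]: "U 0 j = (if j = 1 then -1 else 0)"
  by (simp add: U_def)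

lemma T_1_0 [simp]: "T (Suc 0) 0 = 4"
  by (simp add: T_def)

lemma U_1_0 [simp]: "U (Suc 0) 0 = 4"
  by (simp add: U_def)

lemma T_Suc: "n \<noteq> 0 \<or> j \<noteq> 0 \<Longrightarrow> T (Suc n) j = -3 * T n j + U n j"
  by (cases j; cases n) (auto simp: T_def U_def)

lemma U_Suc_0: "n \<noteq> 0 \<Longrightarrow> U (Suc n) 0 = -4 * T n 0 + U n 0"
  by (cases n) (auto simp: T_def U_def)

lemma U_Suc_Suc: "U (Suc n) (Suc j) = -4 * T n (Suc j) + U n (Suc j) + T (Suc n) j"
  by (simp add: T_def U_def)

lemma T_U_eq_0: "(n < j \<longrightarrow> T n j = 0) \<and> (n + 1 < j \<longrightarrow> U n j = 0)"
proof (induction n arbitrary: j)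
  case 0
  show ?case by simp
next
  case (Suc n)
  have T_vanishes: "T (Suc n) i = 0" if "Suc n < i" for i
    using that Suc.IH[of i] by (simp add: T_Suc)
  have "U (Suc n) j = 0" if j: "Suc n + 1 < j"
  proof -
    obtain i where "j = Suc i" using j by (cases j) auto
    then show ?thesis using j Suc.IH[of j] T_vanishes[of i] by (simp add: U_Suc_Suc)
  qed
  with T_vanishes show ?case by blast
qed

lemma T_eq_0: "n < j \<Longrightarrow> T n j = 0"
  using T_U_eq_0 by blast

lemma U_eq_0: "n + 1 < j \<Longrightarrow> U n j = 0"
  using T_U_eq_0 by blast

definition T_moment :: "nat \<Rightarrow> nat \<Rightarrow> int" where
  "T_moment n k = (\<Sum>j\<le>n. a_seq (k + j) * T n j)"

definition U_moment :: "nat \<Rightarrow> nat \<Rightarrow> int" where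
  "U_moment n k = (\<Sum>j\<le>n + 1. a_seq (k + j) * U n j)"

lemma T_moment_0: "T_moment 0 k = 0"
  by (simp add: T_moment_def)

lemma T_moment_1: "T_moment (Suc 0) k = 4 * a_seq k - a_seq (k + 1)"
  by (simp add: T_moment_def T_Suc)

lemma U_moment_1: "U_moment (Suc 0) k = T_moment (Suc 0) k + T_moment (Suc 0) (k + 1)"
  by (simp add: T_moment_1 U_moment_def numeral_2_eq_2 T_Suc U_Suc_Suc)

lemma T_moment_Suc:
  assumes "n \<noteq> 0"
  shows "T_moment (Suc n) k = -3 * T_moment n k + U_moment n k"
proof -
  have "T_moment (Suc n) k
      = -3 * (\<Sum>j\<le>Suc n. a_seq (k + j) * T n j) + (\<Sum>j\<le>Suc n. a_seq (k + j) * U n j)"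
    using assms
    by (simp add: T_moment_def T_Suc sum_distrib_left sum.distrib sum_subtractf sum_negf
        algebra_simps)
  then show ?thesis
    by (simp add: T_moment_def U_moment_def T_eq_0)
qed

text \<open>The last term is the contribution of \<open>T\<^sub>n\<^sub>+\<^sub>1\<^sub>,\<^sub>j\<^sub>-\<^sub>1\<close>: the index shift
  turns the weight \<open>a\<^sub>k\<^sub>+\<^sub>j\<close> into \<open>a\<^sub>k\<^sub>+\<^sub>1\<^sub>+\<^sub>j\<close>.\<close>
lemma U_moment_Suc:
  assumes "n \<noteq> 0"
  shows "U_moment (Suc n) k = -4 * T_moment n k + U_moment n k + T_moment (Suc n) (k + 1)"
proof -
  have "(\<Sum>j\<le>Suc M. a_seq (k + j) * U (Suc n) j)
      = -4 * (\<Sum>j\<le>Suc M. a_seq (k + j) * T n j) + (\<Sum>j\<le>Suc M. a_seq (k + j) * U n j)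
        + (\<Sum>j\<le>M. a_seq (k + 1 + j) * T (Suc n) j)" for M
    using assms
    by (simp only: sum.atMost_Suc_shift)
      (simp add: U_Suc_0 U_Suc_Suc sum_distrib_left sum.distrib sum_subtractf sum_negf
        algebra_simps)
  from this[of "Suc n"] show ?thesis
    by (simp add: U_moment_def T_moment_def T_eq_0 U_eq_0)
qed

lemma T_moment_Suc_Suc:
  "T_moment (Suc (Suc n)) k
     = -2 * T_moment (Suc n) k - T_moment n k + T_moment (Suc n) (k + 1)"
proof (cases n)
  case 0
  then show ?thesis
    using T_moment_Suc[of 1 k] by (simp add: U_moment_1 T_moment_0)
next
  case (Suc m)
  then show ?thesis
    using T_moment_Suc[of "Suc n" k] U_moment_Suc[of n k] T_moment_Suc[of n k] by simp
qed

definition binom :: "nat \<Rightarrow> int \<Rightarrow> int" where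
  "binom m i = (if i < 0 then 0 else int (m choose nat i))"

definition ballot :: "nat \<Rightarrow> int \<Rightarrow> int" where
  "ballot m i = binom m i - binom m (i - 1)"

lemma binom_Suc: "binom (Suc m) i = binom m i + binom m (i - 1)"
proof (cases "i \<le> 0")
  case True
  then show ?thesis by (auto simp: binom_def)
next
  case False
  then have "nat i = Suc (nat (i - 1))" by simp
  with False show ?thesis by (simp add: binom_def)
qed

lemma binom_Suc_Suc: "binom (Suc (Suc m)) i = binom m i + 2 * binom m (i - 1) + binom m (i - 2)"
  by (simp add: binom_Suc)

lemma binom_symmetric: "binom m i = binom m (int m - i)"
proof -
  consider "i < 0" | "int m < i" | "0 \<le> i" "i \<le> int m" by linarith
  then show ?thesis
  proof cases
    case 1
    then show ?thesis by (simp add: binom_def binomial_eq_0)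
  next
    case 2
    then show ?thesis by (simp add: binom_def)
  next
    case 3
    then have "nat (int m - i) = m - nat i" "nat i \<le> m" by auto
    then show ?thesis using 3 by (simp add: binom_def binomial_symmetric[of "nat i" m])
  qed
qed

lemma ballot_Suc_Suc:
  "ballot (Suc (Suc m)) i = ballot m i + 2 * ballot m (i - 1) + ballot m (i - 2)"
  by (simp add: ballot_def binom_Suc_Suc diff_diff_eq)

lemma a_seq_binom: "a_seq k = binom (2 * k - 1) (int k)"
  by (simp add: a_seq_def binom_def)

lemma T_moment_ballot:
  assumes "1 \<le> k" "n \<le> k + 1"
  shows "T_moment n k = ballot (2 * k - 1) (int k - int n)"
  using assms
proof (induction n arbitrary: k rule: induct_nat_012)
  case 0
  have "binom (2 * k - 1) (int k - 1) = binom (2 * k - 1) (int k)"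
    using "0.prems" binom_symmetric[of "2 * k - 1" "int k - 1"] by simp
  then show ?case by (simp add: T_moment_0 ballot_def)
next
  case 1
  define m where "m = 2 * k - 1"
  have "int m = 2 * int k - 1"
    using "1.prems" by (simp add: m_def)
  then have "binom m (int k - 1) = binom m (int k)" "binom m (int k + 1) = binom m (int k - 2)"
    using binom_symmetric[of m "int k - 1"] binom_symmetric[of m "int k + 1"] by simp_all
  moreover have "a_seq (k + 1) = binom (Suc (Suc m)) (int k + 1)"
    using "1.prems" by (simp add: a_seq_binom m_def add.commute)
  ultimately show ?case
    unfolding T_moment_1 a_seq_binom[of k] ballot_def m_def[symmetric]
    by (simp add: binom_Suc_Suc)
next
  case (ge2 n)
  have "2 * Suc k - 1 = Suc (Suc (2 * k - 1))"
    using ge2.prems by simp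
  then have "T_moment (Suc n) (k + 1) = ballot (Suc (Suc (2 * k - 1))) (int k - int n)"
    using ge2.IH(2)[of "k + 1"] ge2.prems by simp
  moreover have "T_moment n k = ballot (2 * k - 1) (int k - int n)"
    "T_moment (Suc n) k = ballot (2 * k - 1) (int k - int n - 1)"
    using ge2.IH[of k] ge2.prems by (simp_all add: algebra_simps)
  ultimately show ?case
    by (simp add: T_moment_Suc_Suc ballot_Suc_Suc algebra_simps)
qed

theorem proposition7p1:
  fixes n :: nat
  assumes "n \<ge> 1"
  shows "(\<Sum>j = 0..n. a_seq (n + j) * T n j) = 1
       \<and> (\<Sum>j = 0..n + 1. a_seq (n + j) * U n j) = 3"
proof -
  have T_sum: "T_moment n n = 1"
    using T_moment_ballot[of n n] assms by (simp add: ballot_def binom_def)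
  have "T_moment (Suc n) n = 0"
    using T_moment_ballot[of n "Suc n"] assms by (simp add: ballot_def binom_def)
  then have U_sum: "U_moment n n = 3"
    using T_moment_Suc[of n n] T_sum assms by simp
  show ?thesis
    using T_sum U_sum by (simp add: T_moment_def U_moment_def atLeast0AtMost)
qed

end
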